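(* Assume the loss function $f(\cdot;\Xi)$ is nonnegative and $B$-Lipschitz for every $\Xi$. Let $\mathcal{D},\tilde{\mathcal{D}}$ be two samples of size $Nn$ (each consisting of $N$ local data sets of size $n$) differing in only a single example. Let $\bar{\mathbf{w}}^T,\bar{\mathbf{v}}^T$ denote the outputs of DFedAvgM after $T$ steps run on $\mathcal{D}$ and $\tilde{\mathcal{D}}$ respectively, and let $\delta_t:=\|\bar{\mathbf{w}}^t-\bar{\mathbf{v}}^t\|$. Then for every $\Xi$ and every $t_0\in\{0,1,\dots,n\}$, under the random selection rule (local samples drawn uniformly at random with replacement), $$\mathbb{E}|f(\bar{\mathbf{w}}^T;\Xi)-f(\bar{\mathbf{v}}^T;\Xi)|\le t_0(\sup f)\left(1-\left(\frac{n-1}{n}\right)^K\right)+B\,\mathbb{E}(\delta_T\mid\delta_{t_0}=0).$$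
   Context: DFedAvgM: $N$ clients connected by a graph with symmetric mixing matrix $\mathbf{M}=[m_{i,j}]$ (nonzero only on graph edges and the diagonal, all-ones vector spanning the null space of $\mathbf{I}-\mathbf{M}$, $\mathbf{I}\succeq\mathbf{M}\succ-\mathbf{I}$). Client $i$ holds local data set $\mathcal{D}_i$ of $n$ examples. In round $t$, each client performs $K$ local steps $\mathbf{w}^{t,k+1}_i=\mathbf{w}^{t,k}_i-\eta_t\nabla f_i(\mathbf{w}^{t,k}_i;\xi^{t,k}_i)+\beta(\mathbf{w}^{t,k}_i-\mathbf{w}^{t,k-1}_i)$, $k=0,\dots,K-1$, with $\mathbf{w}^{t,-1}_i=\mathbf{w}^{t,0}_i$ and $\xi^{t,k}_i$ drawn i.i.d. uniformly with replacement from $\mathcal{D}_i$, then sets $\mathbf{w}^{t+1,0}_i=\sum_\ell m_{i,\ell}\mathbf{w}^{t,K}_\ell$. The averaged iterate is $\bar{\mathbf{w}}^t=\frac1N\sum_i\mathbf{w}^{t,0}_i$ (and $\bar{\mathbf{v}}^t$ analogously for the run on $\tilde{\mathcal{D}}$). $\sup f<\infty$ denotes the uniform bound on the nonnegative loss. *)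

theory Defs
  imports "HOL-Analysis.Analysis" "HOL-Probability.Probability"
begin

text \<open>Mixing matrix on clients 0..N-1 over a graph with (symmetric) edge relation E:
  symmetric, supported on edges and diagonal, null space of I - M spanned by the
  all-ones vector, and I \<succeq> M \<succ> -I (Loewner order, as quadratic forms).\<close>
definition mixing_matrix :: "nat \<Rightarrow> (nat \<Rightarrow> nat \<Rightarrow> bool) \<Rightarrow> (nat \<Rightarrow> nat \<Rightarrow> real) \<Rightarrow> bool" where
  "mixing_matrix N E M \<longleftrightarrow>
     (\<forall>i<N. \<forall>j<N. E i j \<longleftrightarrow> E j i) \<and>
     (\<forall>i<N. \<forall>j<N. M i j = M j i) \<and>
     (\<forall>i<N. \<forall>j<N. M i j \<noteq> 0 \<longrightarrow> i = j \<or> E i j) \<and>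
     (\<forall>x :: nat \<Rightarrow> real.
        (\<forall>i<N. x i - (\<Sum>j<N. M i j * x j) = 0) \<longleftrightarrow> (\<exists>c. \<forall>i<N. x i = c)) \<and>
     (\<forall>x :: nat \<Rightarrow> real.
        (\<Sum>i<N. \<Sum>j<N. M i j * x i * x j) \<le> (\<Sum>i<N. x i ^ 2)) \<and>
     (\<forall>x :: nat \<Rightarrow> real. (\<exists>i<N. x i \<noteq> 0) \<longrightarrow>
        (\<Sum>i<N. x i ^ 2) + (\<Sum>i<N. \<Sum>j<N. M i j * x i * x j) > 0)"

text \<open>K local heavy-ball steps from w0; returns (w^{k-1}, w^k), with w^{-1} = w^0.
  xi k is the example used at local step k; g w z is the gradient of f(.;z) at w.\<close>
fun local_iter :: "('a::real_vector \<Rightarrow> 'z \<Rightarrow> 'a) \<Rightarrow> real \<Rightarrow> real \<Rightarrow> (nat \<Rightarrow> 'z) \<Rightarrow> 'a \<Rightarrow> nat \<Rightarrow> 'a \<times> 'a" where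
  "local_iter g eta beta xi w0 0 = (w0, w0)"
| "local_iter g eta beta xi w0 (Suc k) =
     (let (p, c) = local_iter g eta beta xi w0 k
      in (c, c - eta *\<^sub>R g c (xi k) + beta *\<^sub>R (c - p)))"

text \<open>Client iterates w_i^{t,0} of DFedAvgM. D i j = j-th example of client i,
  s (t,i,k) = index (in 0..n-1) drawn by client i at local step k of round t.\<close>
fun dfedavgm :: "(nat \<Rightarrow> nat \<Rightarrow> real) \<Rightarrow> nat \<Rightarrow> nat \<Rightarrow> ('a::real_vector \<Rightarrow> 'z \<Rightarrow> 'a) \<Rightarrow> (nat \<Rightarrow> real) \<Rightarrow> real
     \<Rightarrow> (nat \<Rightarrow> nat \<Rightarrow> 'z) \<Rightarrow> (nat \<Rightarrow> 'a) \<Rightarrow> (nat \<times> nat \<times> nat \<Rightarrow> nat) \<Rightarrow> nat \<Rightarrow> nat \<Rightarrow> 'a" where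
  "dfedavgm M N K g eta beta D w0 s 0 = w0"
| "dfedavgm M N K g eta beta D w0 s (Suc t) =
     (\<lambda>i. \<Sum>l<N. M i l *\<^sub>R
        snd (local_iter g (eta t) beta (\<lambda>k. D l (s (t, l, k))) (dfedavgm M N K g eta beta D w0 s t l) K))"

definition dfedavgm_avg :: "(nat \<Rightarrow> nat \<Rightarrow> real) \<Rightarrow> nat \<Rightarrow> nat \<Rightarrow> ('a::real_vector \<Rightarrow> 'z \<Rightarrow> 'a) \<Rightarrow> (nat \<Rightarrow> real) \<Rightarrow> real
     \<Rightarrow> (nat \<Rightarrow> nat \<Rightarrow> 'z) \<Rightarrow> (nat \<Rightarrow> 'a) \<Rightarrow> (nat \<times> nat \<times> nat \<Rightarrow> nat) \<Rightarrow> nat \<Rightarrow> 'a" where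
  "dfedavgm_avg M N K g eta beta D w0 s t =
     (1 / real N) *\<^sub>R (\<Sum>i<N. dfedavgm M N K g eta beta D w0 s t i)"

definition selection_pmf :: "nat \<Rightarrow> nat \<Rightarrow> nat \<Rightarrow> nat \<Rightarrow> (nat \<times> nat \<times> nat \<Rightarrow> nat) pmf" where
  "selection_pmf N K n R = Pi_pmf ({..<R} \<times> {..<N} \<times> {..<K}) 0 (\<lambda>_. pmf_of_set {..<n})"

definition cond_expect_event :: "'s pmf \<Rightarrow> 's set \<Rightarrow> ('s \<Rightarrow> real) \<Rightarrow> real" where
  "cond_expect_event P A X =
     measure_pmf.expectation P (\<lambda>s. indicator A s * X s) / measure_pmf.prob P A"

end

theory Submission imports Defs begin

text \<open>If the differing example (i0, j0) is never drawn before round t0, both runs coincide up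
  to round t0; so on the event \<delta>_t0 = 0 the Lipschitz bound applies, while its complement is
  covered by the t0 events "client i0 draws j0 in round t", each of probability
  1 - ((n - 1) / n)^K, on which the loss difference is at most sup f.\<close>

lemma local_iter_cong:
  assumes "\<And>k. k < m \<Longrightarrow> xi k = xi' k"
  shows "local_iter g eta beta xi w m = local_iter g eta beta xi' w m"
  using assms by (induction m) (auto simp: Let_def split: prod.splits)

lemma dfedavgm_eq_if_not_sampled:
  assumes "\<And>i j. (i, j) \<noteq> (i0, j0) \<Longrightarrow> D i j = D' i j"
    and "\<forall>t'<t. \<forall>k<K. s (t', i0, k) \<noteq> j0"
  shows "dfedavgm M N K g eta beta D w0 s t = dfedavgm M N K g eta beta D' w0 s t"
  using assms(2)
proof (induction t)
  case 0
  then show ?case by simp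
next
  case (Suc t)
  then have IH: "dfedavgm M N K g eta beta D w0 s t = dfedavgm M N K g eta beta D' w0 s t"
    by auto
  have "local_iter g (eta t) beta (\<lambda>k. D l (s (t, l, k))) w K
      = local_iter g (eta t) beta (\<lambda>k. D' l (s (t, l, k))) w K" for l w
    using Suc.prems assms(1) by (intro local_iter_cong) (metis lessI prod.inject)
  then show ?case by (simp add: IH)
qed

lemma measure_Pi_pmf_avoid:
  assumes "finite A" "C \<subseteq> A"
  shows "measure_pmf.prob (Pi_pmf A dflt (\<lambda>_. p)) {s. \<forall>x\<in>C. s x \<notin> X}
         = measure_pmf.prob p (- X) ^ card C"
proof -
  have "{s. \<forall>x\<in>C. s x \<notin> X} = Pi A (\<lambda>x. if x \<in> C then - X else UNIV)"
    using assms(2) by (auto simp: Pi_def)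
  then have "measure_pmf.prob (Pi_pmf A dflt (\<lambda>_. p)) {s. \<forall>x\<in>C. s x \<notin> X}
             = (\<Prod>x\<in>A. measure_pmf.prob p (if x \<in> C then - X else UNIV))"
    by (simp add: measure_Pi_pmf_Pi[OF assms(1)])
  also have "\<dots> = measure_pmf.prob p (- X) ^ card C"
    using assms by (simp add: if_distrib prod.If_cases Int_absorb1)
  finally show ?thesis .
qed

lemma prob_selection_sampled_in_round:
  assumes "t < R" "i0 < N" "j0 < n"
  shows "measure_pmf.prob (selection_pmf N K n R) {s. \<exists>k<K. s (t, i0, k) = j0}
         = 1 - ((real n - 1) / real n) ^ K"
proof -
  define Q where "Q = selection_pmf N K n R"
  define Sampled where "Sampled = {s. \<exists>k<K. s (t, i0, k) = j0}"
  define C where "C = (\<lambda>k. (t, i0, k)) ` {..<K}"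
  have C: "C \<subseteq> {..<R} \<times> {..<N} \<times> {..<K}" "card C = K"
    using assms by (auto simp: C_def card_image inj_on_def)
  have not_Sampled: "- Sampled = {s. \<forall>x\<in>C. s x \<notin> {j0}}"
    by (auto simp: Sampled_def C_def)
  have "measure_pmf.prob Q (- Sampled)
        = measure_pmf.prob (pmf_of_set {..<n}) (- {j0}) ^ card C"
    unfolding Q_def selection_pmf_def not_Sampled using C(1) by (intro measure_Pi_pmf_avoid) auto
  also have "measure_pmf.prob (pmf_of_set {..<n}) (- {j0}) = (real n - 1) / real n"
  proof -
    have "{..<n} \<inter> - {j0} = {..<n} - {j0}" "{..<n} \<noteq> {}"
      using assms by auto
    moreover have "card ({..<n} - {j0}) = n - 1"
      using assms by (simp add: card_Diff_singleton)
    ultimately show ?thesis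
      using assms by (simp add: measure_pmf_of_set of_nat_diff)
  qed
  moreover have "measure_pmf.prob Q (- Sampled) = 1 - measure_pmf.prob Q Sampled"
    using measure_pmf.prob_compl[of Sampled Q] by (simp add: Compl_eq_Diff_UNIV)
  ultimately show ?thesis
    unfolding Q_def Sampled_def using C(2) by simp
qed

lemma prob_selection_sampled_before:
  assumes "t0 \<le> R" "i0 < N" "j0 < n"
  shows "measure_pmf.prob (selection_pmf N K n R) {s. \<exists>t<t0. \<exists>k<K. s (t, i0, k) = j0}
         \<le> real t0 * (1 - ((real n - 1) / real n) ^ K)"
proof -
  have "measure_pmf.prob (selection_pmf N K n R) {s. \<exists>t<t0. \<exists>k<K. s (t, i0, k) = j0}
        = measure_pmf.prob (selection_pmf N K n R) (\<Union>t<t0. {s. \<exists>k<K. s (t, i0, k) = j0})"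
    by (intro arg_cong[where f = "measure_pmf.prob _"]) auto
  also have "\<dots> \<le> (\<Sum>t<t0. measure_pmf.prob (selection_pmf N K n R) {s. \<exists>k<K. s (t, i0, k) = j0})"
    by (rule measure_UNION_le) auto
  also have "\<dots> = real t0 * (1 - ((real n - 1) / real n) ^ K)"
    using assms by (simp add: prob_selection_sampled_in_round)
  finally show ?thesis .
qed

lemma prob_dfedavgm_avg_differ_le:
  assumes "\<And>i j. (i, j) \<noteq> (i0, j0) \<Longrightarrow> D i j = D' i j"
    and "t0 \<le> R" "i0 < N" "j0 < n"
  shows "measure_pmf.prob (selection_pmf N K n R)
           (- {s. norm (dfedavgm_avg M N K g eta beta D w0 s t0
                        - dfedavgm_avg M N K g eta beta D' w0 s t0) = 0})
         \<le> real t0 * (1 - ((real n - 1) / real n) ^ K)"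
proof -
  have "dfedavgm M N K g eta beta D w0 s t0 = dfedavgm M N K g eta beta D' w0 s t0"
    if "\<forall>t<t0. \<forall>k<K. s (t, i0, k) \<noteq> j0" for s
    using assms(1) that by (rule dfedavgm_eq_if_not_sampled)
  then have "- {s. norm (dfedavgm_avg M N K g eta beta D w0 s t0
                         - dfedavgm_avg M N K g eta beta D' w0 s t0) = 0}
             \<subseteq> {s. \<exists>t<t0. \<exists>k<K. s (t, i0, k) = j0}"
    by (auto simp: dfedavgm_avg_def)
  then have "measure_pmf.prob (selection_pmf N K n R)
               (- {s. norm (dfedavgm_avg M N K g eta beta D w0 s t0
                            - dfedavgm_avg M N K g eta beta D' w0 s t0) = 0})
             \<le> measure_pmf.prob (selection_pmf N K n R) {s. \<exists>t<t0. \<exists>k<K. s (t, i0, k) = j0}"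
    by (intro measure_pmf.finite_measure_mono) auto
  also have "\<dots> \<le> real t0 * (1 - ((real n - 1) / real n) ^ K)"
    using assms(2-4) by (rule prob_selection_sampled_before)
  finally show ?thesis .
qed

lemma finite_set_pmf_selection_pmf:
  assumes "n \<ge> 1"
  shows "finite (set_pmf (selection_pmf N K n R))"
proof -
  have "{..<n} \<noteq> {}"
    using assms by (simp add: lessThan_empty_iff)
  then have "set_pmf (pmf_of_set {..<n}) = {..<n}"
    by (intro set_pmf_of_set) auto
  then show ?thesis
    unfolding selection_pmf_def by (subst set_Pi_pmf) (auto intro!: finite_PiE_dflt)
qed

lemma expectation_indicator_le_cond_expect_event:
  assumes "\<And>s. X s \<ge> 0"
  shows "measure_pmf.expectation P (\<lambda>s. indicator A s * X s) \<le> cond_expect_event P A X"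
proof (cases "measure_pmf.prob P A = 0")
  case True
  then have "AE s in P. indicator A s * X s = 0"
    by (simp add: AE_measure_pmf_iff measure_pmf_zero_iff indicator_def disjoint_iff)
  then have "measure_pmf.expectation P (\<lambda>s. indicator A s * X s) = 0"
    by (simp add: integral_eq_zero_AE)
  then show ?thesis using True by (simp add: cond_expect_event_def)
next
  case False
  then have "0 < measure_pmf.prob P A" "measure_pmf.prob P A \<le> 1"
    by (simp_all add: order_less_le)
  moreover have "0 \<le> measure_pmf.expectation P (\<lambda>s. indicator A s * X s)"
    using assms by (intro Bochner_Integration.integral_nonneg) simp
  ultimately show ?thesis
    by (simp add: cond_expect_event_def le_divide_eq mult_left_le)
qed

lemma expectation_le_split_on_event:
  assumes "finite (set_pmf P)" "0 \<le> B" "\<And>s. Y s \<ge> 0"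
    and "\<And>s. s \<in> A \<Longrightarrow> Z s \<le> B * Y s" and "\<And>s. s \<notin> A \<Longrightarrow> Z s \<le> S"
  shows "measure_pmf.expectation P Z
         \<le> S * measure_pmf.prob P (- A) + B * cond_expect_event P A Y"
proof -
  note integrable = integrable_measure_pmf_finite[OF assms(1)]
  have "measure_pmf.expectation P Z
        \<le> measure_pmf.expectation P (\<lambda>s. S * indicator (- A) s + B * (indicator A s * Y s))"
    using assms(4,5) by (intro integral_mono integrable) (auto simp: indicator_def)
  also have "\<dots> = S * measure_pmf.prob P (- A)
                 + B * measure_pmf.expectation P (\<lambda>s. indicator A s * Y s)"
    by (simp add: Bochner_Integration.integral_add[OF integrable integrable])
  also have "\<dots> \<le> S * measure_pmf.prob P (- A) + B * cond_expect_event P A Y"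
    using assms(2,3) by (simp add: mult_left_mono expectation_indicator_le_cond_expect_event)
  finally show ?thesis .
qed

theorem lemmaA4:
  fixes f :: "'a::euclidean_space \<Rightarrow> 'z \<Rightarrow> real" and g :: "'a \<Rightarrow> 'z \<Rightarrow> 'a"
    and M :: "nat \<Rightarrow> nat \<Rightarrow> real" and E :: "nat \<Rightarrow> nat \<Rightarrow> bool"
    and N n K T t0 i0 j0 :: nat and eta :: "nat \<Rightarrow> real" and beta B :: real
    and D D' :: "nat \<Rightarrow> nat \<Rightarrow> 'z" and w0 :: "nat \<Rightarrow> 'a" and \<Xi> :: 'z
  assumes "N \<ge> 1" and "n \<ge> 1"
    and "mixing_matrix N E M"
    and "\<And>w z. f w z \<ge> 0"
    and "bdd_above (range (case_prod f))"
    and "\<And>z. B-lipschitz_on UNIV (\<lambda>w. f w z)"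
    and "\<And>w z. GDERIV (\<lambda>v. f v z) w :> g w z"
    and "i0 < N" and "j0 < n"
    and "\<And>i j. (i, j) \<noteq> (i0, j0) \<Longrightarrow> D i j = D' i j"
    and "t0 \<le> n"
  shows "measure_pmf.expectation (selection_pmf N K n (max T t0))
           (\<lambda>s. \<bar>f (dfedavgm_avg M N K g eta beta D w0 s T) \<Xi>
                 - f (dfedavgm_avg M N K g eta beta D' w0 s T) \<Xi>\<bar>)
         \<le> real t0 * (SUP p. case_prod f p) * (1 - ((real n - 1) / real n) ^ K)
           + B * cond_expect_event (selection_pmf N K n (max T t0))
                   {s. norm (dfedavgm_avg M N K g eta beta D w0 s t0
                             - dfedavgm_avg M N K g eta beta D' w0 s t0) = 0}
                   (\<lambda>s. norm (dfedavgm_avg M N K g eta beta D w0 s T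
                             - dfedavgm_avg M N K g eta beta D' w0 s T))"
proof -
  define P where "P = selection_pmf N K n (max T t0)"
  define W where "W = (\<lambda>D s. dfedavgm_avg M N K g eta beta D w0 s)"
  define S where "S = (SUP p. case_prod f p)"
  have f_le_S: "f w z \<le> S" for w z
    using cSUP_upper[OF _ assms(5), of "(w, z)"] by (simp add: S_def)
  have "S \<ge> 0"
    using f_le_S assms(4) order_trans by blast
  have "measure_pmf.expectation P (\<lambda>s. \<bar>f (W D s T) \<Xi> - f (W D' s T) \<Xi>\<bar>)
        \<le> S * measure_pmf.prob P (- {s. norm (W D s t0 - W D' s t0) = 0})
          + B * cond_expect_event P {s. norm (W D s t0 - W D' s t0) = 0}
                  (\<lambda>s. norm (W D s T - W D' s T))"
  proof (rule expectation_le_split_on_event)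
    show "finite (set_pmf P)"
      unfolding P_def using assms(2) by (rule finite_set_pmf_selection_pmf)
    show "B \<ge> 0"
      using assms(6) lipschitz_on_nonneg by blast
    show "\<bar>f (W D s T) \<Xi> - f (W D' s T) \<Xi>\<bar> \<le> B * norm (W D s T - W D' s T)" for s
      using lipschitz_onD[OF assms(6), of "W D s T" "W D' s T"] by (simp add: dist_norm)
    show "\<bar>f (W D s T) \<Xi> - f (W D' s T) \<Xi>\<bar> \<le> S" for s
      using f_le_S[of "W D s T" \<Xi>] f_le_S[of "W D' s T" \<Xi>]
        assms(4)[of "W D s T" \<Xi>] assms(4)[of "W D' s T" \<Xi>] by linarith
  qed simp
  also have "measure_pmf.prob P (- {s. norm (W D s t0 - W D' s t0) = 0})
             \<le> real t0 * (1 - ((real n - 1) / real n) ^ K)"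
    unfolding P_def W_def using assms(10) max.cobounded2 assms(8,9)
    by (rule prob_dfedavgm_avg_differ_le)
  then have "S * measure_pmf.prob P (- {s. norm (W D s t0 - W D' s t0) = 0})
             \<le> S * (real t0 * (1 - ((real n - 1) / real n) ^ K))"
    using \<open>S \<ge> 0\<close> by (rule mult_left_mono)
  finally show ?thesis
    unfolding P_def W_def S_def by (simp add: mult_ac)
qed

end
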